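(* Let $S=s_1,\ldots,s_n$ be a sequence of nonnegative integers, $\gamma>0$ and $k$ a positive integer. Let $(L,\alpha,\beta)$ be an optimal solution of $\textsc{Geo}$ for $S,\gamma,k$, with $L=\ell_1,\ldots,\ell_n$. If there is an index $j$ with $s_j\ell_j\ne0$, then $\alpha\ge\frac{1}{1+nk}$.
   Context: A level sequence is $L=\ell_1,\ldots,\ell_n$ of integers with $0\le\ell_i\le k$; set $\ell_0=0$. The penalty is $\mathrm{pen}(x,y)=\max(y-x,0)\,\gamma\log n$. The geometric distribution is $p_{\mathrm{geo}}(s;\lambda)=(1-\lambda)\lambda^s$ (with $0^0=1$). For $0\le\alpha<1$, $0<\beta<1$: $\mathrm{score}_{\mathrm{geo}}(L,S;\alpha,\beta,\gamma)=\sum_{i=1}^n\big[-\log p_{\mathrm{geo}}(s_i;\beta\alpha^{\ell_i})+\mathrm{pen}(\ell_{i-1},\ell_i)\big]$. Problem $\textsc{Geo}$: given $S,\gamma,k$, find $L$, $\alpha$ and $\beta$ minimizing this score. *)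

theory Defs
  imports Complex_Main "HOL-Library.Extended_Real"
begin

definition level_seq :: "nat \<Rightarrow> nat \<Rightarrow> (nat \<Rightarrow> nat) \<Rightarrow> bool" where
  "level_seq n k L \<longleftrightarrow> (\<forall>i\<in>{1..n}. L i \<le> k)"

definition prev_level :: "(nat \<Rightarrow> nat) \<Rightarrow> nat \<Rightarrow> nat" where
  "prev_level L i = (if i \<le> 1 then 0 else L (i - 1))"

definition pen :: "nat \<Rightarrow> real \<Rightarrow> nat \<Rightarrow> nat \<Rightarrow> real" where
  "pen n \<gamma> x y = max (real y - real x) 0 * \<gamma> * ln (real n)"

text \<open>Geometric distribution; real power with nat exponent, so 0^0 = 1.\<close>
definition p_geo :: "nat \<Rightarrow> real \<Rightarrow> real" where
  "p_geo s lam = (1 - lam) * lam ^ s"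

definition neglog :: "real \<Rightarrow> ereal" where
  "neglog p = (if p \<le> 0 then \<infinity> else ereal (- ln p))"

definition score_geo ::
  "nat \<Rightarrow> (nat \<Rightarrow> nat) \<Rightarrow> (nat \<Rightarrow> nat) \<Rightarrow> real \<Rightarrow> real \<Rightarrow> real \<Rightarrow> ereal" where
  "score_geo n L S \<alpha> \<beta> \<gamma> =
     (\<Sum>i\<in>{1..n}. neglog (p_geo (S i) (\<beta> * \<alpha> ^ L i))
                  + ereal (pen n \<gamma> (prev_level L i) (L i)))"

definition geo_feasible :: "nat \<Rightarrow> nat \<Rightarrow> (nat \<Rightarrow> nat) \<Rightarrow> real \<Rightarrow> real \<Rightarrow> bool" where
  "geo_feasible n k L \<alpha> \<beta> \<longleftrightarrow> level_seq n k L \<and> 0 \<le> \<alpha> \<and> \<alpha> < 1 \<and> 0 < \<beta> \<and> \<beta> < 1"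

definition geo_optimal ::
  "nat \<Rightarrow> (nat \<Rightarrow> nat) \<Rightarrow> real \<Rightarrow> nat \<Rightarrow> (nat \<Rightarrow> nat) \<Rightarrow> real \<Rightarrow> real \<Rightarrow> bool" where
  "geo_optimal n S \<gamma> k L \<alpha> \<beta> \<longleftrightarrow>
     geo_feasible n k L \<alpha> \<beta> \<and>
     (\<forall>L' \<alpha>' \<beta>'. geo_feasible n k L' \<alpha>' \<beta>' \<longrightarrow>
        score_geo n L S \<alpha> \<beta> \<gamma> \<le> score_geo n L' S \<alpha>' \<beta>' \<gamma>)"

end

theory Submission
  imports Defs
begin

text \<open>
  For fixed levels and \<beta>, the score as a function of \<alpha> is a constant minus
  \<open>\<Sum>i. ln (1 - \<beta> \<alpha>^l\<^sub>i)\<close> minus \<open>N ln \<alpha>\<close>, where \<open>N = \<Sum>i. s\<^sub>i l\<^sub>i \<ge> 1\<close>.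
  Raising \<alpha> to \<open>a' = 1/(1+nk)\<close> increases each \<open>ln (1 - \<beta> \<alpha>^l)\<close> term by at most
  \<open>k(a' - \<alpha>)/(1 - a')\<close>, in total by at most \<open>1 - \<alpha>/a'\<close>, whereas \<open>N ln \<alpha>\<close> grows
  by at least \<open>ln a' - ln \<alpha> > 1 - \<alpha>/a'\<close>. So an \<alpha> below \<open>a'\<close> (including \<open>\<alpha> = 0\<close>,
  where the score is infinite) is never optimal.
\<close>

lemma power_diff_le_of_nat_mult:
  fixes x y :: real
  assumes "0 \<le> y" "y \<le> x" "x \<le> 1"
  shows "x ^ m - y ^ m \<le> real m * (x - y)"
proof (induction m)
  case 0
  then show ?case by simp
next
  case (Suc m)
  have "x ^ m * (x - y) \<le> x - y" and "y * (x ^ m - y ^ m) \<le> x ^ m - y ^ m"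
    using assms by (auto intro!: mult_left_le_one_le mult_left_le power_le_one power_mono)
  moreover have "x ^ Suc m - y ^ Suc m = x ^ m * (x - y) + y * (x ^ m - y ^ m)"
    by (simp add: algebra_simps)
  ultimately show ?case
    using Suc.IH by (simp add: algebra_simps)
qed

lemma ln_one_minus_power_diff_le:
  fixes a a' b :: real
  assumes "0 \<le> a" "a \<le> a'" "a' < 1" "0 < b" "b < 1"
  shows "ln (1 - b * a ^ l) - ln (1 - b * a' ^ l) \<le> real l * (a' - a) / (1 - a')"
proof (cases "l = 0")
  case True
  then show ?thesis by simp
next
  case False
  have pow_le: "a ^ l \<le> a' ^ l" "a' ^ l \<le> a'"
    using assms False by (auto intro: power_mono power_decreasing[of 1 l a', simplified])
  have den: "1 - a' \<le> 1 - b * a' ^ l"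
    using pow_le assms by (smt (verit) mult_left_le_one_le zero_le_power)
  have num: "b * (a' ^ l - a ^ l) \<le> real l * (a' - a)"
    using pow_le assms power_diff_le_of_nat_mult[of a a' l]
    by (smt (verit) mult_left_le_one_le)
  have pos: "0 < 1 - b * a ^ l"
    using pow_le den assms by (smt (verit) mult_left_mono zero_le_power)
  have "ln (1 - b * a ^ l) - ln (1 - b * a' ^ l)
      \<le> ((1 - b * a ^ l) - (1 - b * a' ^ l)) / (1 - b * a' ^ l)"
    using den assms by (intro ln_diff_le pos) simp
  also have "\<dots> = b * (a' ^ l - a ^ l) / (1 - b * a' ^ l)"
    by (simp add: algebra_simps)
  also have "\<dots> \<le> real l * (a' - a) / (1 - a')"
    using num den assms pow_le by (intro frac_le) auto
  finally show ?thesis .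
qed

lemma p_geo_pos:
  assumes "0 < lam" "lam < 1"
  shows "0 < p_geo s lam"
  using assms by (simp add: p_geo_def)

lemma ln_p_geo:
  assumes "0 < lam" "lam < 1"
  shows "ln (p_geo s lam) = ln (1 - lam) + real s * ln lam"
  using assms by (simp add: p_geo_def ln_mult ln_realpow)

lemma score_geo_eq:
  assumes "0 < \<alpha>" "\<alpha> < 1" "0 < \<beta>" "\<beta> < 1"
  shows "score_geo n L S \<alpha> \<beta> \<gamma> = ereal
    ((\<Sum>i\<in>{1..n}. pen n \<gamma> (prev_level L i) (L i)) - real (\<Sum>i\<in>{1..n}. S i) * ln \<beta>
      - (\<Sum>i\<in>{1..n}. ln (1 - \<beta> * \<alpha> ^ L i)) - real (\<Sum>i\<in>{1..n}. S i * L i) * ln \<alpha>)"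
proof -
  have pow: "0 < \<alpha> ^ l" "\<alpha> ^ l \<le> 1" for l
    using assms by (simp_all add: power_le_one)
  have lam: "0 < \<beta> * \<alpha> ^ l" "\<beta> * \<alpha> ^ l < 1" for l
    using assms pow[of l] mult_left_mono[OF pow(2), of \<beta> l] by (simp, linarith)
  have "neglog (p_geo s (\<beta> * \<alpha> ^ l)) = ereal (- ln (p_geo s (\<beta> * \<alpha> ^ l)))" for s l
    using p_geo_pos[OF lam, of s l] by (simp add: neglog_def)
  moreover have "ln (p_geo s (\<beta> * \<alpha> ^ l))
      = ln (1 - \<beta> * \<alpha> ^ l) + real s * ln \<beta> + real (s * l) * ln \<alpha>" for s l
    using ln_p_geo[OF lam] assms by (simp add: ln_mult ln_realpow algebra_simps)
  ultimately have "neglog (p_geo s (\<beta> * \<alpha> ^ l))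
      = ereal (- ln (1 - \<beta> * \<alpha> ^ l) - real s * ln \<beta> - real (s * l) * ln \<alpha>)" for s l
    by simp
  then show ?thesis
    unfolding score_geo_def
    by (simp add: sum.distrib sum_subtractf sum_distrib_left algebra_simps)
qed

lemma score_geo_zero_eq_infinity:
  assumes "j \<in> {1..n}" "S j * L j \<noteq> 0"
  shows "score_geo n L S 0 \<beta> \<gamma> = \<infinity>"
proof -
  have "p_geo (S j) (\<beta> * 0 ^ L j) = 0"
    using assms(2) by (simp add: p_geo_def)
  then show ?thesis
    using assms(1) unfolding score_geo_def sum_Pinfty by (auto simp: neglog_def intro!: bexI[of _ j])
qed

lemma score_geo_less_below_threshold:
  fixes n k :: nat
  defines "a' \<equiv> 1 / (1 + real n * real k)"
  assumes L: "level_seq n k L" and \<beta>: "0 < \<beta>" "\<beta> < 1"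
    and \<alpha>: "0 \<le> \<alpha>" "\<alpha> < a'"
    and j: "j \<in> {1..n}" "S j * L j \<noteq> 0"
  shows "score_geo n L S a' \<beta> \<gamma> < score_geo n L S \<alpha> \<beta> \<gamma>"
proof -
  have "L j \<le> k"
    using L j unfolding level_seq_def by blast
  then have nk_pos: "0 < n * k"
    using j by auto
  then have nk: "1 \<le> real n * real k"
    by (metis Suc_leI One_nat_def of_nat_1 of_nat_le_iff of_nat_mult)
  then have a': "0 < a'" "a' < 1"
    unfolding a'_def by simp_all
  have score_a': "score_geo n L S a' \<beta> \<gamma> < \<infinity>"
    using score_geo_eq[OF a' \<beta>] by simp
  show ?thesis
  proof (cases "\<alpha> = 0")
    case True
    then show ?thesis
      using score_a' score_geo_zero_eq_infinity[of j n S L, OF j] by simp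
  next
    case False
    with \<alpha> a' have \<alpha>_pos: "0 < \<alpha>" and \<alpha>_less_1: "\<alpha> < 1"
      by simp_all
    define N where "N = (\<Sum>i\<in>{1..n}. S i * L i)"
    have "S j * L j \<le> N"
      unfolding N_def using j by (intro member_le_sum) auto
    moreover have "0 < S j * L j"
      using j by simp
    ultimately have N: "1 \<le> real N"
      by linarith
    have "(\<Sum>i\<in>{1..n}. ln (1 - \<beta> * \<alpha> ^ L i) - ln (1 - \<beta> * a' ^ L i))
        \<le> (\<Sum>i\<in>{1..n}. real k * (a' - \<alpha>) / (1 - a'))"
    proof (rule sum_mono)
      fix i assume "i \<in> {1..n}"
      then have "real (L i) \<le> real k"
        using L unfolding level_seq_def by simp
      then have "real (L i) * (a' - \<alpha>) / (1 - a') \<le> real k * (a' - \<alpha>) / (1 - a')"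
        using \<alpha> a' by (intro divide_right_mono mult_right_mono) simp_all
      then show "ln (1 - \<beta> * \<alpha> ^ L i) - ln (1 - \<beta> * a' ^ L i) \<le> real k * (a' - \<alpha>) / (1 - a')"
        using ln_one_minus_power_diff_le[of \<alpha> a' \<beta> "L i"] \<alpha> a' \<beta> by linarith
    qed
    also have "\<dots> = 1 - \<alpha> / a'"
    proof -
      have "1 - a' = real n * real k * a'"
        using nk unfolding a'_def by (simp add: field_simps)
      then have "real n * (real k * (a' - \<alpha>) / (1 - a')) = (a' - \<alpha>) / a'"
        using nk_pos by simp
      then show ?thesis
        using a' by (simp add: diff_divide_distrib)
    qed
    also have "\<dots> < ln a' - ln \<alpha>"
      \<comment> \<open>strict \<open>ln x < x - 1\<close> at \<open>x = \<alpha>/a' \<noteq> 1\<close>\<close>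
      using ln_le_minus_one[of "\<alpha> / a'"] ln_eq_minus_one[of "\<alpha> / a'"] \<alpha>_pos \<alpha> a'
      by (force simp: ln_div)
    also have "\<dots> \<le> real N * (ln a' - ln \<alpha>)"
      using N \<alpha>_pos \<alpha> by (simp add: mult_le_cancel_right1)
    finally show ?thesis
      using score_geo_eq[OF a' \<beta>] score_geo_eq[OF \<alpha>_pos \<alpha>_less_1 \<beta>]
      by (simp add: N_def sum_subtractf algebra_simps)
  qed
qed

theorem lemma6:
  fixes S L :: "nat \<Rightarrow> nat" and n k j :: nat and \<gamma> \<alpha> \<beta> :: real
  assumes "\<gamma> > 0" and "k > 0"
    and "geo_optimal n S \<gamma> k L \<alpha> \<beta>"
    and "j \<in> {1..n}" and "S j * L j \<noteq> 0"
  shows "\<alpha> \<ge> 1 / (1 + real n * real k)"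
proof (rule ccontr)
  assume below: "\<not> ?thesis"
  have feasible: "geo_feasible n k L \<alpha> \<beta>"
    and optimal: "\<And>L' \<alpha>' \<beta>'. geo_feasible n k L' \<alpha>' \<beta>' \<Longrightarrow>
      score_geo n L S \<alpha> \<beta> \<gamma> \<le> score_geo n L' S \<alpha>' \<beta>' \<gamma>"
    using assms(3) unfolding geo_optimal_def by auto
  have "0 < n * k"
    using assms(2,4) by simp
  then have "0 < 1 / (1 + real n * real k)" "1 / (1 + real n * real k) < 1"
    by (simp_all add: add_pos_pos)
  then have "score_geo n L S \<alpha> \<beta> \<gamma> \<le> score_geo n L S (1 / (1 + real n * real k)) \<beta> \<gamma>"
    using feasible by (intro optimal) (simp add: geo_feasible_def)
  moreover have "score_geo n L S (1 / (1 + real n * real k)) \<beta> \<gamma> < score_geo n L S \<alpha> \<beta> \<gamma>"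
    using feasible below assms(4,5)
    by (intro score_geo_less_below_threshold) (auto simp: geo_feasible_def)
  ultimately show False
    by simp
qed

end
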